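(* Let $r\in[0,1]^n$ with $r\neq 0$, let $k\in\{1,\dots,n\}$, and let $D:\{1,\dots,n\}\to(0,\infty)$ be non-increasing. Let $\sigma_r$ be a permutation ordering $r$, and define the NDCG loss of a permutation $\sigma$ by $$\mathcal L(\sigma)=\frac{\sum_{i=1}^k r(\sigma_r(i))D(i)-\sum_{i=1}^k r(\sigma(i))D(i)}{\sum_{i=1}^k r(\sigma_r(i))D(i)}.$$ Let $G(0)=0$, $G(i)=\sum_{j=1}^i D(j)$, and $f(X)=G(\min\{|X|,k\})$ for $X\subseteq V$. Then $f$ is submodular, and for every permutation $\sigma$ of $V$, $$\mathcal L(\sigma)=\frac{d_{\hat f}(r\|\sigma)}{\sum_{i=1}^k r(\sigma_r(i))D(i)}.$$
   Context: Let $V=\{1,\dots,n\}$. A permutation $\sigma$ is a bijection $V\to V$, where $\sigma(i)$ is the element placed at rank $i$. Write $S^\sigma_0=\emptyset$, $S^\sigma_j=\{\sigma(1),\dots,\sigma(j)\}$. For $f:2^V\to\mathbb{R}$ define $h^f_\sigma\in\mathbb{R}^n$ by $h^f_\sigma(\sigma(j))=f(S^\sigma_j)-f(S^\sigma_{j-1})$. For $x\in\mathbb{R}^n$, $\sigma_x$ orders $x$ if $x(\sigma_x(1))\ge\cdots\ge x(\sigma_x(n))$; the Lovász extension is $\hat f(x)=\langle x,h^f_{\sigma_x}\rangle$ (independent of the choice of $\sigma_x$). $f$ is submodular if $f(S)+f(T)\ge f(S\cup T)+f(S\cap T)$ for all $S,T$. The LB divergence is $d_{\hat f}(x\|\sigma)=\hat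 f(x)-\langle x,h^f_\sigma\rangle$ for $x\in[0,1]^n$. *)

theory Defs
  imports "HOL-Analysis.Analysis"
begin

text \<open>Ground set V = {1..n}; vectors in R^n are functions nat => real (only values on {1..n} matter);
  permutations of V are bijections {1..n} -> {1..n}, sigma i = element at rank i.\<close>

definition is_perm :: "nat \<Rightarrow> (nat \<Rightarrow> nat) \<Rightarrow> bool" where
  "is_perm n \<sigma> \<longleftrightarrow> bij_betw \<sigma> {1..n} {1..n}"

definition prefix_set :: "(nat \<Rightarrow> nat) \<Rightarrow> nat \<Rightarrow> nat set" where
  "prefix_set \<sigma> j = \<sigma> ` {1..j}"

definition hvec :: "(nat set \<Rightarrow> real) \<Rightarrow> nat \<Rightarrow> (nat \<Rightarrow> nat) \<Rightarrow> nat \<Rightarrow> real" where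
  "hvec f n \<sigma> v = (let j = inv_into {1..n} \<sigma> v in f (prefix_set \<sigma> j) - f (prefix_set \<sigma> (j - 1)))"

definition inner_n :: "nat \<Rightarrow> (nat \<Rightarrow> real) \<Rightarrow> (nat \<Rightarrow> real) \<Rightarrow> real" where
  "inner_n n x y = (\<Sum>i\<in>{1..n}. x i * y i)"

definition orders :: "nat \<Rightarrow> (nat \<Rightarrow> real) \<Rightarrow> (nat \<Rightarrow> nat) \<Rightarrow> bool" where
  "orders n x \<sigma> \<longleftrightarrow> is_perm n \<sigma> \<and> (\<forall>i j. 1 \<le> i \<and> i \<le> j \<and> j \<le> n \<longrightarrow> x (\<sigma> j) \<le> x (\<sigma> i))"

definition lovasz :: "(nat set \<Rightarrow> real) \<Rightarrow> nat \<Rightarrow> (nat \<Rightarrow> real) \<Rightarrow> real" where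
  "lovasz f n x = inner_n n x (hvec f n (SOME \<sigma>. orders n x \<sigma>))"

definition submodular :: "nat \<Rightarrow> (nat set \<Rightarrow> real) \<Rightarrow> bool" where
  "submodular n f \<longleftrightarrow> (\<forall>S T. S \<subseteq> {1..n} \<and> T \<subseteq> {1..n} \<longrightarrow> f S + f T \<ge> f (S \<union> T) + f (S \<inter> T))"

definition lb_div :: "(nat set \<Rightarrow> real) \<Rightarrow> nat \<Rightarrow> (nat \<Rightarrow> real) \<Rightarrow> (nat \<Rightarrow> nat) \<Rightarrow> real" where
  "lb_div f n x \<sigma> = lovasz f n x - inner_n n x (hvec f n \<sigma>)"

definition ndcg_loss :: "nat \<Rightarrow> (nat \<Rightarrow> real) \<Rightarrow> (nat \<Rightarrow> real) \<Rightarrow> (nat \<Rightarrow> nat) \<Rightarrow> (nat \<Rightarrow> nat) \<Rightarrow> real" where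
  "ndcg_loss k D r \<sigma>r \<sigma> =
     ((\<Sum>i=1..k. r (\<sigma>r i) * D i) - (\<Sum>i=1..k. r (\<sigma> i) * D i)) / (\<Sum>i=1..k. r (\<sigma>r i) * D i)"

end

theory Submission
  imports Defs
begin

text \<open>f(X) = G(min |X| k) depends only on |X|, with marginal gains D(1) \<ge> \<dots> \<ge> D(k) \<ge> 0 = 0 = \<dots>;
  non-increasing marginal gains make it submodular. For such an f, h_\<sigma> puts the j-th gain on
  \<sigma>(j), so \<langle>x, h_\<sigma>\<rangle> = \<Sum>_{j\<le>k} x(\<sigma>(j)) D(j) is the DCG of \<sigma>. All orderings of r list the same
  values, so the Lovasz extension at r is the ideal DCG, and the NDCG loss is the LB divergence
  divided by it.\<close>

lemma orders_same_values:
  assumes o1: "orders n x \<sigma>1" and o2: "orders n x \<sigma>2" and i: "i \<in> {1..n}"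
  shows "x (\<sigma>1 i) = x (\<sigma>2 i)"
proof -
  define ranks where "ranks = [1..<Suc n]"
  define vals where "vals \<sigma> = map (\<lambda>j. - x (\<sigma> j)) ranks" for \<sigma>
  have mset_ranks: "mset (map \<sigma> ranks) = mset_set {1..n}" if "orders n x \<sigma>" for \<sigma>
  proof -
    have "mset ranks = mset_set {1..n}"
      unfolding ranks_def
      by (metis atLeastLessThanSuc_atLeastAtMost distinct_upt mset_set_set set_upt)
    then show ?thesis
      using that by (simp add: mset_map image_mset_mset_set orders_def is_perm_def bij_betw_def)
  qed
  have "mset (vals \<sigma>) = image_mset (\<lambda>v. - x v) (mset (map \<sigma> ranks))" for \<sigma>
    by (simp add: vals_def image_mset.compositionality comp_def)
  then have "mset (vals \<sigma>1) = mset (vals \<sigma>2)"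
    by (simp only: mset_ranks[OF o1] mset_ranks[OF o2])
  moreover have "sorted (vals \<sigma>)" if "orders n x \<sigma>" for \<sigma>
    using that unfolding vals_def ranks_def sorted_iff_nth_mono
    by (auto simp: orders_def simp del: upt_Suc)
  ultimately have "vals \<sigma>1 = vals \<sigma>2"
    using o1 o2 properties_for_sort by metis
  then have "vals \<sigma>1 ! (i - 1) = vals \<sigma>2 ! (i - 1)" by simp
  moreover have "i - 1 < length ranks" "ranks ! (i - 1) = i"
    using i by (auto simp: ranks_def simp del: upt_Suc)
  ultimately show ?thesis unfolding vals_def by simp
qed

lemma marginal_gain_antimono:
  fixes g :: "nat \<Rightarrow> real"
  assumes gains: "\<And>a b. a \<le> b \<Longrightarrow> g (Suc b) - g b \<le> g (Suc a) - g a"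
    and "a \<le> b"
  shows "g (b + d) - g b \<le> g (a + d) - g a"
proof (induction d)
  case (Suc d)
  moreover have "g (Suc (b + d)) - g (b + d) \<le> g (Suc (a + d)) - g (a + d)"
    using gains \<open>a \<le> b\<close> by simp
  ultimately show ?case by simp
qed simp

lemma submodular_card:
  fixes g :: "nat \<Rightarrow> real"
  assumes gains: "\<And>a b. a \<le> b \<Longrightarrow> g (Suc b) - g b \<le> g (Suc a) - g a"
  shows "submodular n (\<lambda>X. g (card X))"
  unfolding submodular_def
proof (intro allI impI)
  fix S T :: "nat set"
  assume "S \<subseteq> {1..n} \<and> T \<subseteq> {1..n}"
  then have fin: "finite S" "finite T" by (auto intro: finite_subset)
  define d where "d = card S - card (S \<inter> T)"
  have "card (S \<inter> T) \<le> card S" "card (S \<inter> T) \<le> card T"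
    using fin by (auto intro: card_mono)
  moreover have "card (S \<union> T) + card (S \<inter> T) = card S + card T"
    using fin card_Un_Int by metis
  ultimately have "card S = card (S \<inter> T) + d" "card (S \<union> T) = card T + d"
    by (auto simp: d_def)
  moreover have "g (card T + d) - g (card T) \<le> g (card (S \<inter> T) + d) - g (card (S \<inter> T))"
    using gains \<open>card (S \<inter> T) \<le> card T\<close> by (rule marginal_gain_antimono)
  ultimately show "g (card (S \<union> T)) + g (card (S \<inter> T)) \<le> g (card S) + g (card T)"
    by simp
qed

lemma hvec_card:
  assumes p: "is_perm n \<sigma>" and j: "j \<in> {1..n}"
  shows "hvec (\<lambda>X. g (card X)) n \<sigma> (\<sigma> j) = g j - g (j - 1)"
proof -
  have inj: "inj_on \<sigma> {1..n}" using p by (simp add: is_perm_def bij_betw_def)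
  have card_prefix: "card (prefix_set \<sigma> i) = i" if "i \<le> n" for i
    using inj_on_subset[OF inj, of "{1..i}"] that by (simp add: prefix_set_def card_image)
  have "inv_into {1..n} \<sigma> (\<sigma> j) = j" using inj j by (simp add: inv_into_f_f)
  moreover have "card (prefix_set \<sigma> (j - 1)) = j - 1" "card (prefix_set \<sigma> j) = j"
    using j by (auto intro: card_prefix)
  ultimately show ?thesis by (simp add: hvec_def)
qed

lemma inner_hvec_card:
  assumes p: "is_perm n \<sigma>"
  shows "inner_n n x (hvec (\<lambda>X. g (card X)) n \<sigma>) = (\<Sum>j=1..n. x (\<sigma> j) * (g j - g (j - 1)))"
proof -
  have "bij_betw \<sigma> {1..n} {1..n}" using p by (simp add: is_perm_def)
  then have "inner_n n x (hvec (\<lambda>X. g (card X)) n \<sigma>)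
      = (\<Sum>j=1..n. x (\<sigma> j) * hvec (\<lambda>X. g (card X)) n \<sigma> (\<sigma> j))"
    unfolding inner_n_def by (rule sum.reindex_bij_betw[symmetric])
  also have "\<dots> = (\<Sum>j=1..n. x (\<sigma> j) * (g j - g (j - 1)))"
    using hvec_card[OF p] by (intro sum.cong) auto
  finally show ?thesis .
qed

text \<open>lovasz picks an arbitrary ordering by SOME; for cardinality-based functions the choice is
  harmless because all orderings list the same values.\<close>

lemma lovasz_card:
  assumes o: "orders n x \<sigma>"
  shows "lovasz (\<lambda>X. g (card X)) n x = inner_n n x (hvec (\<lambda>X. g (card X)) n \<sigma>)"
proof -
  define \<tau> where "\<tau> = (SOME \<sigma>. orders n x \<sigma>)"
  have o\<tau>: "orders n x \<tau>" unfolding \<tau>_def using o by (metis someI)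
  have "lovasz (\<lambda>X. g (card X)) n x = (\<Sum>j=1..n. x (\<tau> j) * (g j - g (j - 1)))"
    unfolding lovasz_def \<tau>_def[symmetric]
    using o\<tau> by (simp add: inner_hvec_card orders_def)
  also have "\<dots> = (\<Sum>j=1..n. x (\<sigma> j) * (g j - g (j - 1)))"
    using orders_same_values[OF o\<tau> o] by (intro sum.cong) auto
  finally show ?thesis
    using o by (simp add: inner_hvec_card orders_def)
qed

lemma truncated_sum_gain:
  fixes D :: "nat \<Rightarrow> real"
  assumes "1 \<le> j"
  shows "(\<Sum>i=1..min j k. D i) - (\<Sum>i=1..min (j - 1) k. D i) = (if j \<le> k then D j else 0)"
proof -
  obtain m where "j = Suc m" using assms by (cases j) auto
  then show ?thesis by (cases "m < k") (auto simp: min_def)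
qed

lemma truncated_sum_gain_antimono:
  fixes D :: "nat \<Rightarrow> real"
  assumes Dpos: "\<forall>i\<in>{1..n}. D i > 0"
    and Dmono: "\<forall>i\<in>{1..n}. \<forall>j\<in>{1..n}. i \<le> j \<longrightarrow> D j \<le> D i"
    and k: "k \<le> n" and ab: "a \<le> b"
  defines "g m \<equiv> \<Sum>i=1..min m k. D i"
  shows "g (Suc b) - g b \<le> g (Suc a) - g a"
proof -
  have gain: "g (Suc m) - g m = (if Suc m \<le> k then D (Suc m) else 0)" for m
    using truncated_sum_gain[where j="Suc m" and k=k and D=D] by (simp add: g_def)
  have "D (Suc b) \<le> D (Suc a)" if "Suc b \<le> k"
    using Dmono that k ab by auto
  moreover have "0 \<le> D (Suc a)" if "Suc a \<le> k"
    using Dpos that k by (auto intro: less_imp_le)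
  ultimately show ?thesis
    using ab by (simp add: gain)
qed

lemma inner_hvec_truncated:
  fixes D :: "nat \<Rightarrow> real"
  assumes p: "is_perm n \<sigma>" and k: "k \<le> n"
  shows "inner_n n x (hvec (\<lambda>X. \<Sum>i=1..min (card X) k. D i) n \<sigma>) = (\<Sum>j=1..k. x (\<sigma> j) * D j)"
proof -
  have "inner_n n x (hvec (\<lambda>X. \<Sum>i=1..min (card X) k. D i) n \<sigma>)
      = (\<Sum>j=1..n. if j \<le> k then x (\<sigma> j) * D j else 0)"
    unfolding inner_hvec_card[OF p, where g="\<lambda>m. \<Sum>i=1..min m k. D i"]
    using truncated_sum_gain[where k=k and D=D] by (intro sum.cong) auto
  also have "\<dots> = (\<Sum>j\<in>{1..n} \<inter> {j. j \<le> k}. x (\<sigma> j) * D j)"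
    by (simp add: sum.inter_restrict)
  also have "{1..n} \<inter> {j. j \<le> k} = {1..k}" using k by auto
  finally show ?thesis .
qed

theorem mainTheorem11:
  fixes n k :: nat and r D :: "nat \<Rightarrow> real" and \<sigma>r :: "nat \<Rightarrow> nat"
    and f :: "nat set \<Rightarrow> real" and G :: "nat \<Rightarrow> real"
  assumes r01: "\<forall>i\<in>{1..n}. 0 \<le> r i \<and> r i \<le> 1"
    and rnz: "\<exists>i\<in>{1..n}. r i \<noteq> 0"
    and k: "1 \<le> k" "k \<le> n"
    and Dpos: "\<forall>i\<in>{1..n}. D i > 0"
    and Dmono: "\<forall>i\<in>{1..n}. \<forall>j\<in>{1..n}. i \<le> j \<longrightarrow> D j \<le> D i"
    and ord: "orders n r \<sigma>r"
    and G_def: "\<forall>i. G i = (\<Sum>j=1..i. D j)"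
    and f_def: "\<forall>X. f X = G (min (card X) k)"
  shows "submodular n f \<and>
    (\<forall>\<sigma>. is_perm n \<sigma> \<longrightarrow>
       ndcg_loss k D r \<sigma>r \<sigma> = lb_div f n r \<sigma> / (\<Sum>i=1..k. r (\<sigma>r i) * D i))"
proof
  have f: "f = (\<lambda>X. \<Sum>i=1..min (card X) k. D i)"
    using f_def G_def by auto
  show "submodular n f"
    unfolding f using truncated_sum_gain_antimono[OF Dpos Dmono \<open>k \<le> n\<close>]
    by (rule submodular_card)
  have "lovasz f n r = inner_n n r (hvec f n \<sigma>r)"
    unfolding f using ord by (rule lovasz_card)
  also have "\<dots> = (\<Sum>i=1..k. r (\<sigma>r i) * D i)"
    using ord \<open>k \<le> n\<close> unfolding f orders_def by (intro inner_hvec_truncated) auto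
  finally have ideal_dcg: "lovasz f n r = (\<Sum>i=1..k. r (\<sigma>r i) * D i)" .
  show "\<forall>\<sigma>. is_perm n \<sigma> \<longrightarrow>
      ndcg_loss k D r \<sigma>r \<sigma> = lb_div f n r \<sigma> / (\<Sum>i=1..k. r (\<sigma>r i) * D i)"
  proof (intro allI impI)
    fix \<sigma> assume "is_perm n \<sigma>"
    show "ndcg_loss k D r \<sigma>r \<sigma> = lb_div f n r \<sigma> / (\<Sum>i=1..k. r (\<sigma>r i) * D i)"
      unfolding ndcg_loss_def lb_div_def ideal_dcg
      unfolding f inner_hvec_truncated[OF \<open>is_perm n \<sigma>\<close> \<open>k \<le> n\<close>] ..
  qed
qed

end
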